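(* Assume the setup described in the context (graph $G$ with $n-1\ge 3$ vertices and $s\ge3$ edges, $M=K_1\vee G$ with $\ell=s+n-1$ edges $e_1,\dots,e_\ell$, the normalized $m$-fold cover $\mathcal{H}=(L,H)$ of $M$, and the quantities $t$, $P_3,\dots,P_6$, $x_\mathcal{H}$, $S_i$). Then: (i) $\displaystyle\sum_{1\le i_1<i_2<i_3\le \ell}\left|\bigcap_{j=1}^3 S_{i_j}\right| \le t\,m^{n-2} - x_\mathcal{H}\,m^{n-3} + |P_3|\,m^{n-3}$; (ii) $\displaystyle\sum_{1\le i_1<\cdots<i_4\le \ell}\left|\bigcap_{j=1}^4 S_{i_j}\right| \ge |P_4|\,m^{n-3} - 2|P_4|\,x_\mathcal{H}\,m^{n-4}$; (iii) $\displaystyle\sum_{1\le i_1<\cdots<i_5\le \ell}\left|\bigcap_{j=1}^5 S_{i_j}\right| \le |P_5|\,m^{n-3} + \left(\binom{\ell}{5}-|P_5|\right)m^{n-4}$; (iv) $\displaystyle\sum_{1\le i_1<\cdots<i_6\le \ell}\left|\bigcap_{j=1}^6 S_{i_j}\right| \ge |P_6|\,m^{n-3} - 2|P_6|\,x_\mathcal{H}\,m^{n-4}$; (v) for every integer $k\ge 7$, $\displaystyle\sum_{1\le i_1<\cdots<i_k\le \ell}\left|\bigcap_{j=1}^k S_{i_j}\right| \le \binom{\ell}{k} m^{n-4}$.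
   Context: All graphs are finite and simple; $[m]=\{1,\dots,m\}$. For $S,U \subseteq V(H)$, $E_H(S,U)$ is the set of edges of $H$ with one endpoint in $S$ and the other in $U$. A cover of a graph $G$ is a pair $\mathcal{H}=(L,H)$ where $H$ is a graph and $L: V(G)\to \mathcal{P}(V(H))$ satisfies: (1) $\{L(u): u\in V(G)\}$ is a partition of $V(H)$; (2) for each $u \in V(G)$, $H[L(u)]$ is complete; (3) if $E_H(L(u),L(v))\neq\emptyset$ then $u=v$ or $uv\in E(G)$; (4) if $uv \in E(G)$ then $E_H(L(u),L(v))$ is a matching (possibly empty). The cover is $m$-fold if $|L(u)|=m$ for all $u$. Setup: $G$ is a graph with $n-1$ vertices, where $n\ge 4$, and $s\ge 3$ edges $e_1,\dots,e_s$, with $e_i=u_iv_i$. $M=K_1\vee G$ is obtained by adding a new vertex $w$ adjacent to all vertices of $G$; so $M$ has $n$ vertices, and its $n-1$ edges incident to $w$ are labeled $e_{s+1},\dots,e_{s+n-1}$, so $E(M)=\{e_1,\dots,e_\ell\}$ with $\ell=s+n-1$. $t$ denotes the number of 3-cycles in $M$. For $i\in\{3,4,5,6\}$, $P_i$ is the set of edge sets $A\subseteq E(M)$ with $|A|=i$ such that the spanning subgraph $(V(M),A)$ has exactly $n-3$ connected components. $m\in\mathbb{N}$ and $\mathcal{H}=(L,H)$ is an $m$-fold cover of $M$ such that $|E_H(L(u),L(v))|=m$ for every $uv\in E(M)$, the vertices of $H$ are named so that $L(u)=\{(u,j):j\in[m]\}$ for each $u\in V(M)$, and $(w,j)(v,j)\in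 E(H)$ for every $v\in V(G)$ and $j\in[m]$. For $i\in[s]$, $x_{i}$ is the number of edges of $E_H(L(u_i),L(v_i))$ joining $(u_i,j)$ and $(v_i,j')$ with $j\ne j'$, and $x_\mathcal{H}=\sum_{i=1}^s x_i$. Let $\mathcal{U}=\{I\subseteq V(H): |I\cap L(v)|=1 \text{ for all } v\in V(M)\}$ and, for $i\in[\ell]$ with $e_i=ab$, let $S_i$ be the set of $I\in\mathcal{U}$ such that the induced subgraph $H[I]$ contains an edge of $E_H(L(a),L(b))$. *)

theory Defs
  imports Main
begin

definition sgraph :: "'a set \<Rightarrow> 'a set set \<Rightarrow> bool" where
  "sgraph Vs Es \<longleftrightarrow> finite Vs \<and>
     (\<forall>e\<in>Es. \<exists>a b. e = {a, b} \<and> a \<noteq> b \<and> a \<in> Vs \<and> b \<in> Vs)"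

definition joinV :: "'v set \<Rightarrow> 'v \<Rightarrow> 'v set" where
  "joinV V w = insert w V"

definition joinE :: "'v set \<Rightarrow> 'v set set \<Rightarrow> 'v \<Rightarrow> 'v set set" where
  "joinE V E w = E \<union> {{w, v} | v. v \<in> V}"

definition fib :: "nat \<Rightarrow> 'v \<Rightarrow> ('v \<times> nat) set" where
  "fib m u = {u} \<times> {1..m}"

definition edges_between :: "'a set set \<Rightarrow> 'a set \<Rightarrow> 'a set \<Rightarrow> 'a set set" where
  "edges_between EH S U = {f \<in> EH. \<exists>x\<in>S. \<exists>y\<in>U. f = {x, y}}"

definition is_matching :: "'a set set \<Rightarrow> bool" where
  "is_matching F \<longleftrightarrow> (\<forall>f\<in>F. \<forall>g\<in>F. f \<noteq> g \<longrightarrow> f \<inter> g = {})"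

text \<open>An m-fold cover (L,H) of the graph (VM,EM) whose vertices are named so that
  L(u) = {(u,j) : j in [m]}; H is the graph (VM x [m], EH).\<close>
definition is_named_cover ::
  "'v set \<Rightarrow> 'v set set \<Rightarrow> nat \<Rightarrow> ('v \<times> nat) set set \<Rightarrow> bool" where
  "is_named_cover VM EM m EH \<longleftrightarrow>
     sgraph (VM \<times> {1..m}) EH \<and>
     (\<forall>u\<in>VM. \<forall>x\<in>fib m u. \<forall>y\<in>fib m u. x \<noteq> y \<longrightarrow> {x, y} \<in> EH) \<and>
     (\<forall>u\<in>VM. \<forall>v\<in>VM. edges_between EH (fib m u) (fib m v) \<noteq> {} \<longrightarrow>
          u = v \<or> {u, v} \<in> EM) \<and>
     (\<forall>u v. {u, v} \<in> EM \<longrightarrow> is_matching (edges_between EH (fib m u) (fib m v)))"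

definition x_edge :: "nat \<Rightarrow> ('v \<times> nat) set set \<Rightarrow> 'v set \<Rightarrow> nat" where
  "x_edge m EH e = card {f. \<exists>a b j j'. e = {a, b} \<and> f \<in> edges_between EH (fib m a) (fib m b)
                              \<and> j \<noteq> j' \<and> f = {(a, j), (b, j')}}"

definition xH :: "nat \<Rightarrow> ('v \<times> nat) set set \<Rightarrow> 'v set set \<Rightarrow> nat" where
  "xH m EH E = (\<Sum>e\<in>E. x_edge m EH e)"

definition transversals :: "'v set \<Rightarrow> nat \<Rightarrow> ('v \<times> nat) set set" where
  "transversals VM m = {I. I \<subseteq> VM \<times> {1..m} \<and> (\<forall>v\<in>VM. card (I \<inter> fib m v) = 1)}"

definition Sset :: "'v set \<Rightarrow> nat \<Rightarrow> ('v \<times> nat) set set \<Rightarrow> 'v set \<Rightarrow> ('v \<times> nat) set set" where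
  "Sset VM m EH e = {I \<in> transversals VM m. \<exists>a b. e = {a, b} \<and>
        (\<exists>f\<in>edges_between EH (fib m a) (fib m b). f \<subseteq> I)}"

definition num_triangles :: "'v set \<Rightarrow> 'v set set \<Rightarrow> nat" where
  "num_triangles Vs Es = card {T. T \<subseteq> Vs \<and> card T = 3 \<and>
        (\<forall>x\<in>T. \<forall>y\<in>T. x \<noteq> y \<longrightarrow> {x, y} \<in> Es)}"

definition adjrel :: "'v set set \<Rightarrow> ('v \<times> 'v) set" where
  "adjrel A = {(x, y). {x, y} \<in> A}"

definition components :: "'v set \<Rightarrow> 'v set set \<Rightarrow> 'v set set" where
  "components Vs A = (\<lambda>x. {y \<in> Vs. (x, y) \<in> (adjrel A)\<^sup>*}) ` Vs"

definition Pset :: "'v set \<Rightarrow> 'v set set \<Rightarrow> nat \<Rightarrow> nat \<Rightarrow> 'v set set set" where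
  "Pset Vs Es c i = {A. A \<subseteq> Es \<and> card A = i \<and> card (components Vs A) = c}"

text \<open>sum over 1<=i_1<...<i_k<=l of |S_{i_1} cap ... cap S_{i_k}|, i.e. over k-subsets of edges.\<close>
definition inter_sum :: "'v set \<Rightarrow> 'v set set \<Rightarrow> nat \<Rightarrow> ('v \<times> nat) set set \<Rightarrow> nat \<Rightarrow> nat" where
  "inter_sum VM EM m EH k = (\<Sum>A\<in>{A. A \<subseteq> EM \<and> card A = k}. card (\<Inter>e\<in>A. Sset VM m EH e))"

end

theory Submission
  imports Defs "HOL-Library.FuncSet"
begin

lemma card_PiE_if_eq:
  assumes "finite S" and "c \<in> S"
  shows "card (PiE S (\<lambda>x. if x = c then B else C)) = card B * card C ^ (card S - 1)"
proof -
  have "card (PiE S (\<lambda>x. if x = c then B else C)) = (\<Prod>x\<in>S. card (if x = c then B else C))"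
    using assms(1) by (rule card_PiE)
  also have "\<dots> = card B * (\<Prod>x\<in>S - {c}. card (if x = c then B else C))"
    using assms by (simp add: prod.remove)
  also have "(\<Prod>x\<in>S - {c}. card (if x = c then B else C)) = card C ^ (card S - 1)"
    using assms by simp
  finally show ?thesis .
qed

lemma card_PiE_avoiding:
  assumes "finite C" and "c \<in> C" and "finite B" and "S \<subseteq> B"
  shows "card {h \<in> C \<rightarrow>\<^sub>E B. h c \<notin> S} = (card B - card S) * card B ^ (card C - 1)"
proof -
  have "{h \<in> C \<rightarrow>\<^sub>E B. h c \<notin> S} = PiE C (\<lambda>x. if x = c then B - S else B)"
    using assms(2) by (auto simp: PiE_iff extensional_def split: if_splits)
  then show ?thesis
    using assms by (simp add: card_PiE_if_eq card_Diff_subset finite_subset)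
qed

lemma choose_two_add_le: "(a + 1 choose 2) + (b + 1 choose 2) \<le> (a + b + 1 choose 2)"
  by (induction b) (simp_all add: numeral_2_eq_2)

lemma sum_choose_two_le:
  assumes "finite S" and "\<And>x. x \<in> S \<Longrightarrow> 1 \<le> f x"
  shows "(\<Sum>x\<in>S. f x choose 2) \<le> (1 + (\<Sum>x\<in>S. f x - 1)) choose 2"
  using assms
proof (induction S rule: finite_induct)
  case (insert x S)
  have "f x = (f x - 1) + 1"
    using insert.prems[of x] by simp
  with insert have "(\<Sum>x\<in>insert x S. f x choose 2)
      \<le> ((f x - 1) + 1 choose 2) + ((\<Sum>x\<in>S. f x - 1) + 1 choose 2)"
    by (metis add.commute add_le_mono insertCI le_refl sum.insert)
  also have "\<dots> \<le> (f x - 1) + (\<Sum>x\<in>S. f x - 1) + 1 choose 2"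
    by (rule choose_two_add_le)
  finally show ?case
    using insert by (simp add: add_ac)
qed simp

lemma sgraph_edgeE:
  assumes "sgraph Vs Es" and "e \<in> Es"
  obtains a b where "e = {a, b}" "a \<noteq> b" "a \<in> Vs" "b \<in> Vs"
  using bspec[OF conjunct2[OF assms(1)[unfolded sgraph_def]] assms(2)] by blast

lemma sgraph_subset: "sgraph Vs A \<Longrightarrow> B \<subseteq> A \<Longrightarrow> sgraph Vs B"
  unfolding sgraph_def by blast

lemma finite_edges:
  assumes "sgraph Vs A"
  shows "finite A"
proof -
  have "A \<subseteq> Pow Vs"
    using assms unfolding sgraph_def by fastforce
  moreover have "finite Vs"
    using assms unfolding sgraph_def by simp
  ultimately show ?thesis
    by (simp add: finite_subset)
qed

definition component :: "'v set \<Rightarrow> 'v set set \<Rightarrow> 'v \<Rightarrow> 'v set" where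
  "component Vs A x = {y \<in> Vs. (x, y) \<in> (adjrel A)\<^sup>*}"

definition complete_edges :: "'v set \<Rightarrow> 'v set set" where
  "complete_edges K = {e. e \<subseteq> K \<and> card e = 2}"

lemma components_eq_image: "components Vs A = component Vs A ` Vs"
  unfolding components_def component_def ..

lemma sym_adjrel: "sym (adjrel A)"
  unfolding adjrel_def sym_def by (auto simp: insert_commute)

lemma adjrel_rtrancl_sym: "(x, y) \<in> (adjrel A)\<^sup>* \<Longrightarrow> (y, x) \<in> (adjrel A)\<^sup>*"
  by (meson symD sym_adjrel sym_rtrancl)

lemma adjrel_insert: "adjrel (insert {a, b} A) = adjrel A \<union> {(a, b), (b, a)}"
  unfolding adjrel_def by (auto simp: doubleton_eq_iff)

lemma self_in_component: "x \<in> Vs \<Longrightarrow> x \<in> component Vs A x"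
  unfolding component_def by simp

lemma component_eq_iff:
  assumes "x \<in> Vs" and "y \<in> Vs"
  shows "component Vs A x = component Vs A y \<longleftrightarrow> (x, y) \<in> (adjrel A)\<^sup>*"
proof
  assume "component Vs A x = component Vs A y"
  then show "(x, y) \<in> (adjrel A)\<^sup>*"
    using self_in_component[OF assms(2)] by (auto simp: component_def)
next
  assume "(x, y) \<in> (adjrel A)\<^sup>*"
  then show "component Vs A x = component Vs A y"
    unfolding component_def by (auto intro: rtrancl_trans dest: adjrel_rtrancl_sym)
qed

lemma component_eq_of_mem:
  assumes "x \<in> Vs" and "y \<in> component Vs A x"
  shows "component Vs A y = component Vs A x"
proof -
  have "y \<in> Vs" "(x, y) \<in> (adjrel A)\<^sup>*"
    using assms(2) unfolding component_def by auto
  then show ?thesis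
    using component_eq_iff[OF assms(1)] by metis
qed

lemma component_edge_eq:
  assumes "sgraph Vs A" and "{a, b} \<in> A"
  shows "component Vs A a = component Vs A b"
proof -
  have "a \<in> Vs" "b \<in> Vs"
    using assms unfolding sgraph_def by (metis doubleton_eq_iff)+
  moreover have "(a, b) \<in> adjrel A"
    using assms(2) unfolding adjrel_def by simp
  ultimately show ?thesis
    by (simp add: component_eq_iff)
qed

lemma finite_components: "finite Vs \<Longrightarrow> finite (components Vs A)"
  by (simp add: components_eq_image)

lemma components_subset: "C \<in> components Vs A \<Longrightarrow> C \<subseteq> Vs"
  unfolding components_eq_image component_def by auto

lemma Union_components: "\<Union> (components Vs A) = Vs"
proof
  show "\<Union> (components Vs A) \<subseteq> Vs"
    using components_subset by blast
  show "Vs \<subseteq> \<Union> (components Vs A)"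
  proof
    fix x
    assume "x \<in> Vs"
    then show "x \<in> \<Union> (components Vs A)"
      unfolding components_eq_image by (metis UnionI image_eqI self_in_component)
  qed
qed

lemma components_disjoint:
  assumes "C \<in> components Vs A" and "D \<in> components Vs A" and "C \<inter> D \<noteq> {}"
  shows "C = D"
proof -
  obtain x y where "x \<in> Vs" "C = component Vs A x" "y \<in> Vs" "D = component Vs A y"
    using assms(1,2) unfolding components_eq_image by blast
  moreover obtain z where "z \<in> C" "z \<in> D"
    using assms(3) by blast
  ultimately show ?thesis
    using component_eq_of_mem[of x Vs z A] component_eq_of_mem[of y Vs z A] by simp
qed

lemma finite_component: "finite Vs \<Longrightarrow> C \<in> components Vs A \<Longrightarrow> finite C"
  using components_subset finite_subset by metis

lemma some_elem_component:
  assumes "C \<in> components Vs A"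
  shows "(SOME x. x \<in> C) \<in> Vs" and "component Vs A (SOME x. x \<in> C) = C"
proof -
  obtain x where x: "x \<in> Vs" "C = component Vs A x"
    using assms unfolding components_eq_image by blast
  then have "x \<in> C"
    by (simp add: self_in_component)
  then have "(SOME x. x \<in> C) \<in> C"
    by (rule someI)
  then show "(SOME x. x \<in> C) \<in> Vs" "component Vs A (SOME x. x \<in> C) = C"
    using components_subset[OF assms] component_eq_of_mem[OF x(1)] x(2) by auto
qed

lemma card_component_ge_1:
  assumes "finite Vs" and "C \<in> components Vs A"
  shows "1 \<le> card C"
proof -
  obtain x where "x \<in> Vs" "C = component Vs A x"
    using assms(2) unfolding components_eq_image by blast
  then have "C \<noteq> {}"
    using self_in_component by fastforce
  then show ?thesis
    using finite_component[OF assms] by (simp add: Suc_le_eq card_gt_0_iff)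
qed

lemma sum_card_components:
  assumes "finite Vs"
  shows "(\<Sum>C\<in>components Vs A. card C) = card Vs"
proof -
  have "pairwise disjnt (components Vs A)"
    unfolding pairwise_def disjnt_def using components_disjoint by metis
  then have "card (\<Union> (components Vs A)) = (\<Sum>C\<in>components Vs A. card C)"
    using finite_component[OF assms] by (rule card_Union_disjoint)
  then show ?thesis
    by (simp add: Union_components)
qed

lemma sum_card_components_minus_1:
  assumes "finite Vs"
  shows "(\<Sum>C\<in>components Vs A. card C - 1) = card Vs - card (components Vs A)"
proof -
  have "(\<Sum>C\<in>components Vs A. card C - 1)
      = (\<Sum>C\<in>components Vs A. card C) - (\<Sum>C\<in>components Vs A. 1)"
    using card_component_ge_1[OF assms] by (rule sum_subtractf_nat)
  then show ?thesis
    by (simp add: sum_card_components[OF assms])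
qed

lemma inj_on_compose_component:
  "inj_on (\<lambda>h. \<lambda>v\<in>Vs. h (component Vs A v)) (components Vs A \<rightarrow>\<^sub>E B)"
proof (rule inj_onI)
  fix h h'
  assume h: "h \<in> components Vs A \<rightarrow>\<^sub>E B" and h': "h' \<in> components Vs A \<rightarrow>\<^sub>E B"
    and eq: "(\<lambda>v\<in>Vs. h (component Vs A v)) = (\<lambda>v\<in>Vs. h' (component Vs A v))"
  show "h = h'"
  proof (rule PiE_ext[OF h h'])
    fix C
    assume "C \<in> components Vs A"
    then obtain x where x: "x \<in> Vs" "C = component Vs A x"
      unfolding components_eq_image by blast
    then show "h C = h' C"
      using fun_cong[OF eq, of x] by simp
  qed
qed

lemma card_components_empty:
  assumes "finite Vs"
  shows "card (components Vs {}) = card Vs"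
proof -
  have "component Vs {} x = {x}" if "x \<in> Vs" for x
    using that unfolding component_def adjrel_def by auto
  then have "components Vs {} = (\<lambda>x. {x}) ` Vs"
    unfolding components_eq_image by simp
  then show ?thesis
    by (simp add: card_image)
qed

lemma edge_subset_component:
  assumes "sgraph Vs A" and "e \<in> A"
  shows "\<exists>C\<in>components Vs A. e \<in> complete_edges C"
proof -
  obtain a b where e: "e = {a, b}" "a \<noteq> b" "a \<in> Vs" "b \<in> Vs"
    using assms unfolding sgraph_def by blast
  then have "component Vs A a = component Vs A b"
    using assms by (intro component_edge_eq) simp_all
  then have "e \<subseteq> component Vs A a"
    using e self_in_component[of a Vs A] self_in_component[of b Vs A] by simp
  moreover have "component Vs A a \<in> components Vs A"
    using e(3) by (simp add: components_eq_image)
  ultimately show ?thesis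
    using e(1,2) unfolding complete_edges_def by auto
qed

lemma card_complete_edges: "finite K \<Longrightarrow> card (complete_edges K) = card K choose 2"
  unfolding complete_edges_def by (rule n_subsets)

lemma finite_complete_edges: "finite K \<Longrightarrow> finite (complete_edges K)"
  unfolding complete_edges_def by simp

lemma card_edges_le_sum_choose_two:
  assumes "sgraph Vs A"
  shows "card A \<le> (\<Sum>C\<in>components Vs A. card C choose 2)"
proof -
  have fin: "finite Vs"
    using assms unfolding sgraph_def by simp
  have "A \<subseteq> (\<Union>C\<in>components Vs A. complete_edges C)"
    using edge_subset_component[OF assms] by blast
  then have "card A \<le> card (\<Union>C\<in>components Vs A. complete_edges C)"
    using fin finite_component[OF fin]
    by (intro card_mono finite_UN_I finite_components finite_complete_edges) simp_all
  also have "\<dots> \<le> (\<Sum>C\<in>components Vs A. card (complete_edges C))"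
    by (rule card_UN_le[OF finite_components[OF fin]])
  also have "\<dots> = (\<Sum>C\<in>components Vs A. card C choose 2)"
    using fin by (intro sum.cong) (simp_all add: card_complete_edges finite_component)
  finally show ?thesis .
qed

lemma card_edges_le_choose_rank:
  assumes "sgraph Vs A"
  shows "card A \<le> (1 + (card Vs - card (components Vs A))) choose 2"
proof -
  have fin: "finite Vs"
    using assms unfolding sgraph_def by simp
  have "card A \<le> (\<Sum>C\<in>components Vs A. card C choose 2)"
    by (rule card_edges_le_sum_choose_two[OF assms])
  also have "\<dots> \<le> (1 + (\<Sum>C\<in>components Vs A. card C - 1)) choose 2"
    using finite_components[OF fin] card_component_ge_1[OF fin] by (rule sum_choose_two_le)
  finally show ?thesis
    using sum_card_components_minus_1[OF fin] by simp
qed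

lemma card_components_add_lt:
  assumes "sgraph Vs A" and "(r + 1) choose 2 < card A"
  shows "card (components Vs A) + r < card Vs"
proof (rule ccontr)
  assume "\<not> ?thesis"
  then have "1 + (card Vs - card (components Vs A)) \<le> r + 1"
    by linarith
  then have "1 + (card Vs - card (components Vs A)) choose 2 \<le> (r + 1) choose 2"
    by (rule binomial_right_mono)
  then show False
    using card_edges_le_choose_rank[OF assms(1)] assms(2) by linarith
qed

lemma rtrancl_Un_sym_pair:
  assumes sym: "sym R" and xy: "(x, y) \<in> (R \<union> {(a, b), (b, a)})\<^sup>*"
  shows "(x, y) \<in> R\<^sup>* \<or> ((x, a) \<in> R\<^sup>* \<or> (x, b) \<in> R\<^sup>*) \<and> ((y, a) \<in> R\<^sup>* \<or> (y, b) \<in> R\<^sup>*)"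
  using xy
proof (induction rule: rtrancl_induct)
  case (step y z)
  show ?case
  proof (cases "(y, z) \<in> R")
    case True
    then have "(z, y) \<in> R"
      using sym by (meson symD)
    from step.IH show ?thesis
    proof
      assume "(x, y) \<in> R\<^sup>*"
      then show ?thesis
        using True by (meson rtrancl.rtrancl_into_rtrancl)
    next
      assume "((x, a) \<in> R\<^sup>* \<or> (x, b) \<in> R\<^sup>*) \<and> ((y, a) \<in> R\<^sup>* \<or> (y, b) \<in> R\<^sup>*)"
      then show ?thesis
        using \<open>(z, y) \<in> R\<close> by (meson converse_rtrancl_into_rtrancl)
    qed
  next
    case False
    then have "y = a \<or> y = b" "z = a \<or> z = b"
      using step.hyps(2) by auto
    then show ?thesis
      using step.IH by auto
  qed
qed simp

lemma card_components_insert_edge: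
  assumes fin: "finite Vs" and a: "a \<in> Vs" and b: "b \<in> Vs"
  shows "card (components Vs A) \<le> card (components Vs (insert {a, b} A)) + 1"
proof -
  let ?R = "adjrel A"
  define rep where "rep C = (SOME x. x \<in> C)" for C :: "'a set"
  have rep: "rep C \<in> Vs" "component Vs A (rep C) = C" if "C \<in> components Vs A" for C
    unfolding rep_def using some_elem_component[OF that] by simp_all
  define D where "D = components Vs A - {component Vs A b}"
  define g where "g C = component Vs (insert {a, b} A) (rep C)" for C
  have repD: "rep C \<in> Vs" "component Vs A (rep C) = C" "C \<noteq> component Vs A b" if "C \<in> D" for C
    using rep that unfolding D_def by auto
  have not_b: "(rep C, b) \<notin> ?R\<^sup>*" if "C \<in> D" for C
    using repD[OF that] component_eq_iff[OF repD(1)[OF that] b, of A] by simp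
  have "inj_on g D"
  proof (rule inj_onI)
    fix C C'
    assume C: "C \<in> D" and C': "C' \<in> D" and "g C = g C'"
    then have "(rep C, rep C') \<in> (adjrel (insert {a, b} A))\<^sup>*"
      using component_eq_iff[OF repD(1)[OF C] repD(1)[OF C']] unfolding g_def by blast
    then have path: "(rep C, rep C') \<in> (?R \<union> {(a, b), (b, a)})\<^sup>*"
      by (simp add: adjrel_insert)
    have "(rep C, rep C') \<in> ?R\<^sup>* \<or> (rep C, a) \<in> ?R\<^sup>* \<and> (rep C', a) \<in> ?R\<^sup>*"
      using rtrancl_Un_sym_pair[OF sym_adjrel path] not_b[OF C] not_b[OF C'] by simp
    then have "(rep C, rep C') \<in> ?R\<^sup>*"
      using rtrancl_trans[OF _ adjrel_rtrancl_sym, of "rep C" a A "rep C'"] by blast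
    then show "C = C'"
      using repD[OF C] repD[OF C'] component_eq_iff[OF repD(1)[OF C] repD(1)[OF C'], of A]
      by simp
  qed
  moreover have "g ` D \<subseteq> components Vs (insert {a, b} A)"
    using repD unfolding g_def components_eq_image by blast
  ultimately have "card D \<le> card (components Vs (insert {a, b} A))"
    using finite_components[OF fin] by (metis card_image card_mono)
  moreover have "card (components Vs A) \<le> card D + 1"
    unfolding D_def using finite_components[OF fin]
    by (cases "component Vs A b \<in> components Vs A") (auto simp: card_Diff_singleton_if)
  ultimately show ?thesis
    by simp
qed

lemma card_le_card_components_add:
  assumes "sgraph Vs A"
  shows "card Vs \<le> card (components Vs A) + card A"
  using finite_edges[OF assms] assms
proof (induction A rule: finite_induct)
  case empty
  then show ?case
    by (simp add: card_components_empty sgraph_def)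
next
  case (insert e A)
  obtain a b where "e = {a, b}" "a \<in> Vs" "b \<in> Vs"
    using insert.prems unfolding sgraph_def by blast
  moreover have "sgraph Vs A"
    using insert.prems by (rule sgraph_subset) blast
  ultimately show ?case
    using insert card_components_insert_edge[of Vs a b A] by (simp add: sgraph_def)
qed

lemma card_edges_le_rank_if_small_components:
  assumes G: "sgraph Vs A" and small: "\<And>C. C \<in> components Vs A \<Longrightarrow> card C \<le> 2"
  shows "card A \<le> card Vs - card (components Vs A)"
proof -
  have fin: "finite Vs"
    using G unfolding sgraph_def by simp
  have "card C choose 2 = card C - 1" if "C \<in> components Vs A" for C
  proof -
    have "card C = 1 \<or> card C = 2"
      using small[OF that] card_component_ge_1[OF fin that] by linarith
    then show ?thesis
      by (auto simp: numeral_2_eq_2)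
  qed
  then have "(\<Sum>C\<in>components Vs A. card C choose 2) = (\<Sum>C\<in>components Vs A. card C - 1)"
    by (rule sum.cong[OF refl])
  then show ?thesis
    using card_edges_le_sum_choose_two[OF G] sum_card_components_minus_1[OF fin] by simp
qed

lemma complete_edges_if_three_edges:
  assumes G: "sgraph Vs A" and three: "card A = 3"
    and not_forest: "card (components Vs A) \<noteq> card Vs - 3"
  shows "\<exists>K \<in> components Vs A. card K = 3 \<and> A = complete_edges K"
proof -
  let ?c = "components Vs A"
  have fin: "finite Vs"
    using G unfolding sgraph_def by simp
  have "card ?c + 1 < card Vs"
    using card_components_add_lt[OF G, of 1] three by (simp add: numeral_2_eq_2)
  with card_le_card_components_add[OF G] three not_forest
  have "card Vs - card ?c = 2"
    by linarith
  then have rank2: "(\<Sum>C\<in>?c. card C - 1) = 2"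
    by (simp only: sum_card_components_minus_1[OF fin])
  have "\<exists>K\<in>?c. 3 \<le> card K"
  proof (rule ccontr)
    assume "\<not> ?thesis"
    then have "card C \<le> 2" if "C \<in> ?c" for C
      using that by force
    then have "card A \<le> card Vs - card ?c"
      by (rule card_edges_le_rank_if_small_components[OF G])
    then show False
      using \<open>card Vs - card ?c = 2\<close> three by simp
  qed
  then obtain K where K: "K \<in> ?c" "3 \<le> card K" ..
  have "(\<Sum>C\<in>?c. card C - 1) = (card K - 1) + (\<Sum>C\<in>?c - {K}. card C - 1)"
    using finite_components[OF fin] K(1) by (rule sum.remove)
  then have cardK: "card K = 3" and "(\<Sum>C\<in>?c - {K}. card C - 1) = 0"
    using rank2 K(2) by linarith+
  then have small: "card C \<le> 1" if "C \<in> ?c - {K}" for C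
    using that finite_components[OF fin] by (simp add: sum_eq_0_iff)
  have "A \<subseteq> complete_edges K"
  proof
    fix e
    assume "e \<in> A"
    then obtain C where C: "C \<in> ?c" "e \<in> complete_edges C"
      using edge_subset_component[OF G] by meson
    have "e \<subseteq> C" "card e = 2"
      using C(2) unfolding complete_edges_def by simp_all
    then have "2 \<le> card C"
      using card_mono[OF finite_component[OF fin C(1)]] by metis
    then have "C = K"
      using small C(1) by fastforce
    then show "e \<in> complete_edges K"
      using C by simp
  qed
  moreover have "card (complete_edges K) = 3"
    using cardK finite_component[OF fin K(1)] by (simp add: card_complete_edges choose_two)
  ultimately have "A = complete_edges K"
    using three finite_complete_edges[OF finite_component[OF fin K(1)]] card_subset_eq by metis
  then show ?thesis
    using K(1) cardK by blast
qed

definition triangles :: "'v set \<Rightarrow> 'v set set \<Rightarrow> 'v set set" where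
  "triangles Vs Es = {T. T \<subseteq> Vs \<and> card T = 3 \<and> (\<forall>x\<in>T. \<forall>y\<in>T. x \<noteq> y \<longrightarrow> {x, y} \<in> Es)}"

lemma num_triangles_eq_card_triangles: "num_triangles Vs Es = card (triangles Vs Es)"
  unfolding num_triangles_def triangles_def ..

lemma doubleton_in_complete_edges: "x \<in> K \<Longrightarrow> y \<in> K \<Longrightarrow> x \<noteq> y \<Longrightarrow> {x, y} \<in> complete_edges K"
  unfolding complete_edges_def by simp

lemma complete_edges_elim:
  assumes "e \<in> complete_edges K"
  obtains x y where "e = {x, y}" "x \<noteq> y" "x \<in> K" "y \<in> K"
proof -
  have "card e = 2" "e \<subseteq> K"
    using assms unfolding complete_edges_def by simp_all
  moreover from \<open>card e = 2\<close> obtain x y where "e = {x, y}" "x \<noteq> y"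
    unfolding card_2_iff by blast
  ultimately show ?thesis
    by (intro that) auto
qed

lemma triangles_iff:
  "T \<in> triangles Vs Es \<longleftrightarrow> T \<subseteq> Vs \<and> card T = 3 \<and> complete_edges T \<subseteq> Es"
proof
  assume T: "T \<in> triangles Vs Es"
  have "e \<in> Es" if "e \<in> complete_edges T" for e
  proof -
    obtain x y where "e = {x, y}" "x \<noteq> y" "x \<in> T" "y \<in> T"
      using \<open>e \<in> complete_edges T\<close> by (rule complete_edges_elim)
    then show ?thesis
      using T unfolding triangles_def by simp
  qed
  then show "T \<subseteq> Vs \<and> card T = 3 \<and> complete_edges T \<subseteq> Es"
    using T unfolding triangles_def by auto
next
  assume T: "T \<subseteq> Vs \<and> card T = 3 \<and> complete_edges T \<subseteq> Es"
  have "{x, y} \<in> Es" if "x \<in> T" "y \<in> T" "x \<noteq> y" for x y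
    using T doubleton_in_complete_edges[OF that] by blast
  then show "T \<in> triangles Vs Es"
    using T unfolding triangles_def by simp
qed

lemma Union_complete_edges:
  assumes "2 \<le> card K"
  shows "\<Union> (complete_edges K) = K"
proof
  show "\<Union> (complete_edges K) \<subseteq> K"
    unfolding complete_edges_def by blast
  show "K \<subseteq> \<Union> (complete_edges K)"
  proof
    fix x
    assume x: "x \<in> K"
    have "finite K"
      using assms by (metis card.infinite not_numeral_le_zero)
    then have "card (K - {x}) \<ge> 1"
      using assms x by (simp add: card_Diff_singleton)
    then obtain y where "y \<in> K - {x}"
      by (metis all_not_in_conv card.empty not_one_le_zero)
    then have "{x, y} \<in> complete_edges K"
      using x by (auto intro: doubleton_in_complete_edges)
    then show "x \<in> \<Union> (complete_edges K)"
      by blast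
  qed
qed

lemma inj_on_complete_edges: "inj_on complete_edges {K. 2 \<le> card K}"
  by (rule inj_onI) (metis Union_complete_edges mem_Collect_eq)

lemma sgraph_join:
  assumes G: "sgraph V E" and w: "w \<notin> V"
  shows "sgraph (joinV V w) (joinE V E w)"
proof -
  have "\<exists>a b. e = {a, b} \<and> a \<noteq> b \<and> a \<in> insert w V \<and> b \<in> insert w V"
    if e: "e \<in> joinE V E w" for e
  proof (cases "e \<in> E")
    case True
    then show ?thesis
      using G by (elim sgraph_edgeE) blast+
  next
    case False
    then obtain v where "v \<in> V" "e = {w, v}"
      using e unfolding joinE_def by blast
    then show ?thesis
      using w by blast
  qed
  then show ?thesis
    using G unfolding sgraph_def joinV_def by simp
qed

lemma card_joinE:
  assumes G: "sgraph V E" and w: "w \<notin> V"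
  shows "card (joinE V E w) = card E + card V"
proof -
  define W where "W = {{w, v} | v. v \<in> V}"
  have "W = (\<lambda>v. {w, v}) ` V"
    unfolding W_def by blast
  moreover have "inj_on (\<lambda>v. {w, v}) V"
    by (rule inj_onI) (use w in \<open>auto simp: doubleton_eq_iff\<close>)
  ultimately have "card W = card V"
    by (simp add: card_image)
  moreover have "E \<inter> W = {}"
  proof -
    have "w \<notin> e" if "e \<in> E" for e
      using G that by (elim sgraph_edgeE) (use w in auto)
    then show ?thesis
      unfolding W_def by blast
  qed
  moreover have "finite E" "finite W"
    using finite_edges[OF G] conjunct1[OF G[unfolded sgraph_def]] \<open>W = (\<lambda>v. {w, v}) ` V\<close>
    by simp_all
  ultimately show ?thesis
    unfolding joinE_def W_def[symmetric] by (simp add: card_Un_disjoint)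
qed

locale full_cover =
  fixes VM :: "'v set" and EM :: "'v set set" and m :: nat and EH :: "('v \<times> nat) set set"
  assumes graph: "sgraph VM EM"
    and cover: "is_named_cover VM EM m EH"
    and full: "\<And>u v. {u, v} \<in> EM \<Longrightarrow> card (edges_between EH (fib m u) (fib m v)) = m"
begin

lemma finite_VM: "finite VM"
  using graph unfolding sgraph_def by simp

lemma edge_vertices: "{u, v} \<in> EM \<Longrightarrow> u \<noteq> v \<and> u \<in> VM \<and> v \<in> VM"
  using graph unfolding sgraph_def by (metis doubleton_eq_iff)

lemma cover_edge_vertices: "{p, q} \<in> EH \<Longrightarrow> p \<in> VM \<times> {1..m} \<and> q \<in> VM \<times> {1..m}"
  using cover unfolding is_named_cover_def sgraph_def by (metis doubleton_eq_iff)

lemma matching: "{u, v} \<in> EM \<Longrightarrow> is_matching (edges_between EH (fib m u) (fib m v))"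
  using conjunct2[OF conjunct2[OF conjunct2[OF cover[unfolded is_named_cover_def]]]] by blast

lemma lift_unique:
  assumes uv: "{u, v} \<in> EM" and p: "p \<in> fib m u" and q: "q \<in> fib m v" and q': "q' \<in> fib m v"
    and pq: "{p, q} \<in> EH" and pq': "{p, q'} \<in> EH"
  shows "q = q'"
proof -
  have m1: "{p, q} \<in> edges_between EH (fib m u) (fib m v)"
    using pq p q unfolding edges_between_def by blast
  have m2: "{p, q'} \<in> edges_between EH (fib m u) (fib m v)"
    using pq' p q' unfolding edges_between_def by blast
  have "{p, q} = {p, q'}"
  proof (rule ccontr)
    assume "{p, q} \<noteq> {p, q'}"
    then have "{p, q} \<inter> {p, q'} = {}"
      using matching[OF uv, unfolded is_matching_def, rule_format, OF m1 m2] by simp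
    then show False
      by simp
  qed
  moreover have "p \<noteq> q"
    using p q edge_vertices[OF uv] unfolding fib_def by auto
  ultimately show ?thesis
    by (metis doubleton_eq_iff)
qed

definition lifts :: "'v set set \<Rightarrow> ('v \<Rightarrow> nat) set" where
  "lifts A = {f \<in> VM \<rightarrow>\<^sub>E {1..m}. \<forall>e\<in>A. \<exists>a b. e = {a, b} \<and> {(a, f a), (b, f b)} \<in> EH}"

definition transversal_of :: "('v \<Rightarrow> nat) \<Rightarrow> ('v \<times> nat) set" where
  "transversal_of f = (\<lambda>v. (v, f v)) ` VM"

lemma finite_lifts: "finite (lifts A)"
  unfolding lifts_def using finite_PiE[OF finite_VM, of "\<lambda>_. {1..m}"] by simp

lemma lift_range: "f \<in> lifts A \<Longrightarrow> x \<in> VM \<Longrightarrow> f x \<in> {1..m}"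
  unfolding lifts_def by auto

lemma lift_edge:
  assumes "f \<in> lifts A" and "{u, v} \<in> A"
  shows "{(u, f u), (v, f v)} \<in> EH"
proof -
  obtain a b where ab: "{u, v} = {a, b}" "{(a, f a), (b, f b)} \<in> EH"
    using assms unfolding lifts_def by blast
  then have "u = a \<and> v = b \<or> u = b \<and> v = a"
    by (simp add: doubleton_eq_iff)
  then show ?thesis
    using ab(2) by (auto simp: insert_commute)
qed

lemma transversal_of_inj: "inj_on transversal_of (VM \<rightarrow>\<^sub>E {1..m})"
proof (rule inj_onI)
  fix f g
  assume f: "f \<in> VM \<rightarrow>\<^sub>E {1..m}" and g: "g \<in> VM \<rightarrow>\<^sub>E {1..m}"
    and "transversal_of f = transversal_of g"
  then have "(x, f x) \<in> transversal_of g" if "x \<in> VM" for x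
    using that unfolding transversal_of_def by blast
  then show "f = g"
    using f g unfolding transversal_of_def by (intro PiE_ext) auto
qed

lemma transversal_of_mem:
  assumes f: "f \<in> VM \<rightarrow>\<^sub>E {1..m}"
  shows "transversal_of f \<in> transversals VM m"
proof -
  have "transversal_of f \<inter> fib m v = {(v, f v)}" if "v \<in> VM" for v
    using f that unfolding transversal_of_def fib_def by auto
  then show ?thesis
    using f unfolding transversals_def transversal_of_def by auto
qed

lemma transversal_of_surj:
  assumes I: "I \<in> transversals VM m"
  shows "\<exists>f\<in>VM \<rightarrow>\<^sub>E {1..m}. transversal_of f = I"
proof -
  have "\<forall>v\<in>VM. \<exists>j. I \<inter> fib m v = {(v, j)}"
  proof
    fix v
    assume "v \<in> VM"
    then have "card (I \<inter> fib m v) = 1"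
      using I unfolding transversals_def by auto
    then obtain p where p: "I \<inter> fib m v = {p}"
      by (metis card_1_singletonE)
    then have "p \<in> fib m v"
      by auto
    then show "\<exists>j. I \<inter> fib m v = {(v, j)}"
      using p unfolding fib_def by auto
  qed
  then obtain g where g: "\<forall>v\<in>VM. I \<inter> fib m v = {(v, g v)}"
    by metis
  define f where "f = restrict g VM"
  have f: "f \<in> VM \<rightarrow>\<^sub>E {1..m}"
    unfolding f_def using g by (force simp: fib_def)
  have "transversal_of f = I"
  proof
    show "transversal_of f \<subseteq> I"
      using g unfolding transversal_of_def f_def by auto
    show "I \<subseteq> transversal_of f"
    proof
      fix p
      assume p: "p \<in> I"
      then obtain v j where pv: "p = (v, j)" "v \<in> VM" "j \<in> {1..m}"
        using I unfolding transversals_def by auto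
      then have "p \<in> I \<inter> fib m v"
        using p unfolding fib_def by auto
      then have "p = (v, g v)"
        using g pv by auto
      then show "p \<in> transversal_of f"
        using pv unfolding transversal_of_def f_def by auto
    qed
  qed
  then show ?thesis
    using f by blast
qed

lemma transversal_of_in_Sset_iff:
  assumes f: "f \<in> VM \<rightarrow>\<^sub>E {1..m}"
  shows "transversal_of f \<in> Sset VM m EH e \<longleftrightarrow> (\<exists>a b. e = {a, b} \<and> {(a, f a), (b, f b)} \<in> EH)"
proof
  assume "transversal_of f \<in> Sset VM m EH e"
  then obtain a b x y where ab: "e = {a, b}" "{x, y} \<in> EH" "x \<in> fib m a" "y \<in> fib m b"
    "{x, y} \<subseteq> transversal_of f"
    unfolding Sset_def edges_between_def by blast
  then have "x = (a, f a)" "y = (b, f b)"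
    unfolding transversal_of_def fib_def by auto
  then show "\<exists>a b. e = {a, b} \<and> {(a, f a), (b, f b)} \<in> EH"
    using ab by blast
next
  assume "\<exists>a b. e = {a, b} \<and> {(a, f a), (b, f b)} \<in> EH"
  then obtain a b where ab: "e = {a, b}" "{(a, f a), (b, f b)} \<in> EH"
    by blast
  then have "(a, f a) \<in> fib m a" "(b, f b) \<in> fib m b" "a \<in> VM" "b \<in> VM"
    using cover_edge_vertices[OF ab(2)] unfolding fib_def by auto
  then have "{(a, f a), (b, f b)} \<in> edges_between EH (fib m a) (fib m b)"
    "{(a, f a), (b, f b)} \<subseteq> transversal_of f"
    using ab(2) unfolding edges_between_def transversal_of_def by blast+
  moreover have "transversal_of f \<in> transversals VM m"
    using f by (rule transversal_of_mem)
  ultimately show "transversal_of f \<in> Sset VM m EH e"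
    unfolding Sset_def using ab(1) by blast
qed

lemma Inter_Sset_eq_image:
  assumes "A \<noteq> {}"
  shows "(\<Inter>e\<in>A. Sset VM m EH e) = transversal_of ` lifts A"
proof
  show "(\<Inter>e\<in>A. Sset VM m EH e) \<subseteq> transversal_of ` lifts A"
  proof
    fix I
    assume I: "I \<in> (\<Inter>e\<in>A. Sset VM m EH e)"
    obtain e where "e \<in> A"
      using assms by blast
    then have "I \<in> transversals VM m"
      using I unfolding Sset_def by blast
    then obtain f where f: "f \<in> VM \<rightarrow>\<^sub>E {1..m}" "transversal_of f = I"
      using transversal_of_surj by blast
    then have "f \<in> lifts A"
      using I transversal_of_in_Sset_iff[OF f(1)] unfolding lifts_def by auto
    then show "I \<in> transversal_of ` lifts A"
      using f(2) by blast
  qed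
  show "transversal_of ` lifts A \<subseteq> (\<Inter>e\<in>A. Sset VM m EH e)"
    using transversal_of_in_Sset_iff unfolding lifts_def by auto
qed

lemma card_Inter_Sset:
  assumes "A \<noteq> {}"
  shows "card (\<Inter>e\<in>A. Sset VM m EH e) = card (lifts A)"
proof -
  have "inj_on transversal_of (lifts A)"
    using transversal_of_inj by (rule inj_on_subset) (auto simp: lifts_def)
  then show ?thesis
    by (simp add: Inter_Sset_eq_image[OF assms] card_image)
qed

definition edge_subsets :: "nat \<Rightarrow> 'v set set set" where
  "edge_subsets k = {A. A \<subseteq> EM \<and> card A = k}"

lemma finite_EM: "finite EM"
  using graph by (rule finite_edges)

lemma finite_edge_subsets: "finite (edge_subsets k)"
  unfolding edge_subsets_def using finite_EM by simp

lemma card_edge_subsets: "card (edge_subsets k) = card EM choose k"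
  unfolding edge_subsets_def using finite_EM by (rule n_subsets)

lemma Pset_subset_edge_subsets: "Pset VM EM c k \<subseteq> edge_subsets k"
  unfolding Pset_def edge_subsets_def by blast

lemma inter_sum_eq_sum_card_lifts:
  assumes "0 < k"
  shows "inter_sum VM EM m EH k = (\<Sum>A\<in>edge_subsets k. card (lifts A))"
  unfolding inter_sum_def edge_subsets_def
proof (rule sum.cong)
  fix A
  assume "A \<in> {A. A \<subseteq> EM \<and> card A = k}"
  then have "A \<noteq> {}"
    using assms by auto
  then show "card (\<Inter>e\<in>A. Sset VM m EH e) = card (lifts A)"
    by (rule card_Inter_Sset)
qed simp

lemma lifts_agree_along_path:
  assumes A: "A \<subseteq> EM" and f: "f \<in> lifts A" and g: "g \<in> lifts A"
    and path: "(y, z) \<in> (adjrel A)\<^sup>*" and "f y = g y"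
  shows "f z = g z"
  using path
proof (induction rule: rtrancl_induct)
  case base
  then show ?case
    using \<open>f y = g y\<close> .
next
  case (step z u)
  have zu: "{z, u} \<in> A"
    using step.hyps(2) unfolding adjrel_def by simp
  then have uv: "{z, u} \<in> EM" "z \<in> VM" "u \<in> VM"
    using A edge_vertices by blast+
  have "f \<in> VM \<rightarrow>\<^sub>E {1..m}" "g \<in> VM \<rightarrow>\<^sub>E {1..m}"
    using f g unfolding lifts_def by simp_all
  then have "(z, f z) \<in> fib m z" "(u, f u) \<in> fib m u" "(u, g u) \<in> fib m u"
    using uv unfolding fib_def by auto
  moreover have "{(z, f z), (u, f u)} \<in> EH" "{(z, f z), (u, g u)} \<in> EH"
    using lift_edge[OF f zu] lift_edge[OF g zu] step.IH by simp_all
  ultimately have "(u, f u) = (u, g u)"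
    by (rule lift_unique[OF uv(1)])
  then show ?case
    by simp
qed

lemma card_lifts_le:
  assumes A: "A \<subseteq> EM"
  shows "card (lifts A) \<le> m ^ card (components VM A)"
proof -
  let ?c = "components VM A"
  define rep where "rep C = (SOME x. x \<in> C)" for C :: "'v set"
  have rep: "rep C \<in> VM" "component VM A (rep C) = C" if "C \<in> ?c" for C
    unfolding rep_def using some_elem_component[OF that] by simp_all
  define restr where "restr f = (\<lambda>C\<in>?c. f (rep C))" for f :: "'v \<Rightarrow> nat"
  have "inj_on restr (lifts A)"
  proof (rule inj_onI)
    fix f g
    assume f: "f \<in> lifts A" and g: "g \<in> lifts A" and "restr f = restr g"
    show "f = g"
    proof (rule PiE_ext)
      show "f \<in> VM \<rightarrow>\<^sub>E {1..m}" "g \<in> VM \<rightarrow>\<^sub>E {1..m}"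
        using f g unfolding lifts_def by simp_all
    next
      fix x
      assume x: "x \<in> VM"
      define C where "C = component VM A x"
      have C: "C \<in> ?c"
        unfolding C_def components_eq_image using x by simp
      have "f (rep C) = g (rep C)"
        using \<open>restr f = restr g\<close> C unfolding restr_def by (metis restrict_apply')
      moreover have "(rep C, x) \<in> (adjrel A)\<^sup>*"
        using rep[OF C] component_eq_iff[OF rep(1)[OF C] x, of A] unfolding C_def by simp
      ultimately show "f x = g x"
        by (rule lifts_agree_along_path[OF A f g, rotated])
    qed
  qed
  moreover have "restr f \<in> ?c \<rightarrow>\<^sub>E {1..m}" if "f \<in> lifts A" for f
    using that rep(1) unfolding restr_def lifts_def by auto
  then have "restr ` lifts A \<subseteq> ?c \<rightarrow>\<^sub>E {1..m}"
    by blast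
  ultimately have "card (lifts A) \<le> card (?c \<rightarrow>\<^sub>E {1..m})"
    using finite_components[OF finite_VM]
    by (metis card_image card_mono finite_PiE finite_atLeastAtMost)
  then show ?thesis
    using finite_components[OF finite_VM] by (simp add: card_PiE)
qed

lemma card_lifts_le_power:
  assumes A: "A \<subseteq> EM" "A \<noteq> {}" and le: "card (components VM A) \<le> j"
  shows "card (lifts A) \<le> m ^ j"
proof (cases "m = 0")
  case True
  obtain e where "e \<in> EM"
    using A by blast
  then have "VM \<noteq> {}"
    using graph by (elim sgraph_edgeE) auto
  with True have "lifts A = {}"
    unfolding lifts_def by (auto simp: PiE_eq_empty_iff)
  then show ?thesis
    by simp
next
  case False
  then show ?thesis
    using card_lifts_le[OF A(1)] power_increasing[OF le, of m] by simp
qed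

definition straight_colours :: "'v set \<Rightarrow> nat set" where
  "straight_colours e = {j \<in> {1..m}. \<exists>a b. e = {a, b} \<and> {(a, j), (b, j)} \<in> EH}"

lemma straight_colours_subset: "straight_colours e \<subseteq> {1..m}"
  unfolding straight_colours_def by blast

lemma straight_colours_doubleton:
  "straight_colours {a, b} = {j \<in> {1..m}. {(a, j), (b, j)} \<in> EH}"
  unfolding straight_colours_def by (auto simp: doubleton_eq_iff insert_commute)

definition crossed_edges :: "'v set \<Rightarrow> ('v \<times> nat) set set" where
  "crossed_edges e = {f. \<exists>a b j j'. e = {a, b} \<and> f \<in> edges_between EH (fib m a) (fib m b)
                              \<and> j \<noteq> j' \<and> f = {(a, j), (b, j')}}"

lemma finite_edges_between: "finite (edges_between EH (fib m a) (fib m b))"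
proof -
  have "edges_between EH (fib m a) (fib m b) \<subseteq> Pow (VM \<times> {1..m})"
    unfolding edges_between_def using cover_edge_vertices by auto
  then show ?thesis
    using finite_VM by (meson finite_Pow_iff finite_SigmaI finite_atLeastAtMost finite_subset)
qed

lemma edges_between_eq_straight_Un_crossed:
  "edges_between EH (fib m a) (fib m b)
    = (\<lambda>j. {(a, j), (b, j)}) ` straight_colours {a, b} \<union> crossed_edges {a, b}"
proof (intro equalityI subsetI)
  fix f
  assume f: "f \<in> edges_between EH (fib m a) (fib m b)"
  then obtain j j' where jj: "f \<in> EH" "f = {(a, j), (b, j')}" "j \<in> {1..m}" "j' \<in> {1..m}"
    unfolding edges_between_def fib_def by blast
  show "f \<in> (\<lambda>j. {(a, j), (b, j)}) ` straight_colours {a, b} \<union> crossed_edges {a, b}"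
  proof (cases "j = j'")
    case True
    then show ?thesis
      using jj unfolding straight_colours_doubleton by auto
  next
    case False
    then show ?thesis
      unfolding crossed_edges_def using f jj(2) by blast
  qed
next
  fix f
  assume "f \<in> (\<lambda>j. {(a, j), (b, j)}) ` straight_colours {a, b} \<union> crossed_edges {a, b}"
  then show "f \<in> edges_between EH (fib m a) (fib m b)"
  proof
    assume "f \<in> (\<lambda>j. {(a, j), (b, j)}) ` straight_colours {a, b}"
    then obtain j where "j \<in> {1..m}" "{(a, j), (b, j)} \<in> EH" "f = {(a, j), (b, j)}"
      unfolding straight_colours_doubleton by blast
    then show ?thesis
      unfolding edges_between_def fib_def by blast
  next
    assume "f \<in> crossed_edges {a, b}"
    then obtain a' b' where "{a, b} = {a', b'}" "f \<in> edges_between EH (fib m a') (fib m b')"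
      unfolding crossed_edges_def by blast
    then show ?thesis
      unfolding edges_between_def by (auto simp: doubleton_eq_iff)
  qed
qed

lemma card_straight_colours_add_x_edge:
  assumes e: "{a, b} \<in> EM"
  shows "card (straight_colours {a, b}) + x_edge m EH {a, b} = m"
proof -
  let ?S = "(\<lambda>j. {(a, j), (b, j)}) ` straight_colours {a, b}"
  have ab: "a \<noteq> b"
    using edge_vertices[OF e] by simp
  have finite: "finite ?S" "finite (crossed_edges {a, b})"
    using finite_edges_between[of a b] unfolding edges_between_eq_straight_Un_crossed by simp_all
  have "?S \<inter> crossed_edges {a, b} = {}"
    unfolding crossed_edges_def using ab by (auto simp: doubleton_eq_iff)
  then have "card (?S \<union> crossed_edges {a, b}) = card ?S + card (crossed_edges {a, b})"
    using finite by (intro card_Un_disjoint)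
  moreover have "card (?S \<union> crossed_edges {a, b}) = m"
    using full[OF e] unfolding edges_between_eq_straight_Un_crossed .
  moreover have "inj_on (\<lambda>j. {(a, j), (b, j)}) (straight_colours {a, b})"
    by (rule inj_onI) (use ab in \<open>auto simp: doubleton_eq_iff\<close>)
  then have "card ?S = card (straight_colours {a, b})"
    by (rule card_image)
  moreover have "x_edge m EH {a, b} = card (crossed_edges {a, b})"
    unfolding x_edge_def crossed_edges_def ..
  ultimately show ?thesis
    by linarith
qed

lemma x_edge_eq_card_crossed:
  assumes "e \<in> EM"
  shows "x_edge m EH e = m - card (straight_colours e)"
proof -
  obtain a b where "e = {a, b}"
    using graph assms by (rule sgraph_edgeE)
  then have "card (straight_colours e) + x_edge m EH e = m"
    using card_straight_colours_add_x_edge[of a b] assms by simp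
  then show ?thesis
    by linarith
qed

lemma component_constant_lift:
  assumes A: "A \<subseteq> EM" and h: "h \<in> components VM A \<rightarrow>\<^sub>E {1..m}"
    and straight: "\<And>e a. e \<in> A \<Longrightarrow> a \<in> e \<Longrightarrow> h (component VM A a) \<in> straight_colours e"
  shows "(\<lambda>v\<in>VM. h (component VM A v)) \<in> lifts A"
proof -
  let ?f = "\<lambda>v\<in>VM. h (component VM A v)"
  have "?f \<in> VM \<rightarrow>\<^sub>E {1..m}"
    using h unfolding components_eq_image by auto
  moreover have "\<exists>a b. e = {a, b} \<and> {(a, ?f a), (b, ?f b)} \<in> EH" if e: "e \<in> A" for e
  proof -
    obtain a b where ab: "e = {a, b}" "a \<noteq> b" "a \<in> VM" "b \<in> VM"
      using graph subsetD[OF A e] by (rule sgraph_edgeE)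
    have "component VM A a = component VM A b"
      using component_edge_eq[OF sgraph_subset[OF graph A]] e ab(1) by simp
    moreover have "h (component VM A a) \<in> straight_colours {a, b}"
      using straight[OF e] ab(1) by simp
    ultimately have "{(a, ?f a), (b, ?f b)} \<in> EH"
      using ab unfolding straight_colours_doubleton by simp
    then show ?thesis
      using ab(1) by blast
  qed
  ultimately show ?thesis
    unfolding lifts_def by blast
qed

lemma card_lifts_ge:
  assumes A: "A \<subseteq> EM"
  shows "m ^ card (components VM A)
    \<le> card (lifts A) + (\<Sum>e\<in>A. x_edge m EH e) * m ^ (card (components VM A) - 1)"
proof -
  let ?c = "components VM A"
  let ?P = "?c \<rightarrow>\<^sub>E {1..m}"
  define spread where "spread h = (\<lambda>v\<in>VM. h (component VM A v))" for h :: "'v set \<Rightarrow> nat"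
  define Bad where "Bad e = {h \<in> ?P. \<exists>a\<in>e. h (component VM A a) \<notin> straight_colours e}" for e
  have finite_P: "finite ?P"
    using finite_components[OF finite_VM] by (simp add: finite_PiE)
  have card_Bad: "card (Bad e) = x_edge m EH e * m ^ (card ?c - 1)" if e: "e \<in> A" for e
  proof -
    obtain a b where ab: "e = {a, b}" "a \<noteq> b" "a \<in> VM" "b \<in> VM"
      using graph subsetD[OF A e] by (rule sgraph_edgeE)
    have "component VM A b = component VM A a"
      using component_edge_eq[OF sgraph_subset[OF graph A]] e ab(1) by simp
    then have "Bad e = {h \<in> ?P. h (component VM A a) \<notin> straight_colours e}"
      unfolding Bad_def using ab(1) by auto
    moreover have "component VM A a \<in> ?c"
      unfolding components_eq_image using ab(3) by simp
    ultimately show ?thesis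
      using card_PiE_avoiding[OF finite_components[OF finite_VM] _ _ straight_colours_subset]
        x_edge_eq_card_crossed[OF subsetD[OF A e]] by simp
  qed
  have cover: "?P \<subseteq> (\<Union>e\<in>A. Bad e) \<union> {h \<in> ?P. spread h \<in> lifts A}"
  proof
    fix h
    assume h: "h \<in> ?P"
    show "h \<in> (\<Union>e\<in>A. Bad e) \<union> {h \<in> ?P. spread h \<in> lifts A}"
    proof (cases "\<exists>e\<in>A. h \<in> Bad e")
      case False
      then have "h (component VM A a) \<in> straight_colours e" if "e \<in> A" "a \<in> e" for e a
        using that h unfolding Bad_def by blast
      then have "spread h \<in> lifts A"
        unfolding spread_def by (rule component_constant_lift[OF A h])
      then show ?thesis
        using h by blast
    qed blast
  qed
  have "finite ((\<Union>e\<in>A. Bad e) \<union> {h \<in> ?P. spread h \<in> lifts A})"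
    by (rule finite_subset[OF _ finite_P]) (auto simp: Bad_def)
  then have "card ?P \<le> card ((\<Union>e\<in>A. Bad e) \<union> {h \<in> ?P. spread h \<in> lifts A})"
    using cover by (rule card_mono)
  also have "\<dots> \<le> card (\<Union>e\<in>A. Bad e) + card {h \<in> ?P. spread h \<in> lifts A}"
    by (rule card_Un_le)
  also have "card (\<Union>e\<in>A. Bad e) \<le> (\<Sum>e\<in>A. card (Bad e))"
    by (rule card_UN_le[OF finite_edges[OF sgraph_subset[OF graph A]]])
  also have "(\<Sum>e\<in>A. card (Bad e)) = (\<Sum>e\<in>A. x_edge m EH e) * m ^ (card ?c - 1)"
    using card_Bad by (simp add: sum_distrib_right)
  also have "card {h \<in> ?P. spread h \<in> lifts A} \<le> card (lifts A)"
  proof (rule card_inj_on_le[OF _ _ finite_lifts])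
    show "inj_on spread {h \<in> ?P. spread h \<in> lifts A}"
      unfolding spread_def by (rule inj_on_subset[OF inj_on_compose_component]) blast
  qed blast
  finally show ?thesis
    using finite_components[OF finite_VM] by (simp add: card_PiE)
qed

lemma card_lifts_le_fan:
  assumes A: "A \<subseteq> EM" and au: "{a, u} \<in> A" and av: "{a, v} \<in> A" and uv: "u \<noteq> v"
    and S: "S \<subseteq> {1..m}" "\<And>f. f \<in> lifts A \<Longrightarrow> f a \<in> S"
  shows "card (lifts A) \<le> card S * m ^ (card VM - 3)"
proof -
  have "a \<noteq> u \<and> a \<in> VM \<and> u \<in> VM" "a \<noteq> v \<and> a \<in> VM \<and> v \<in> VM"
    using edge_vertices[of a u] edge_vertices[of a v] au av A by auto
  then have a: "a \<in> VM - {u, v}" and VM: "u \<in> VM" "v \<in> VM"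
    by auto
  define restr where "restr f = restrict f (VM - {u, v})" for f :: "'v \<Rightarrow> nat"
  have "inj_on restr (lifts A)"
  proof (rule inj_onI)
    fix f g
    assume f: "f \<in> lifts A" and g: "g \<in> lifts A" and "restr f = restr g"
    then have agree: "f x = g x" if "x \<in> VM - {u, v}" for x
      using that unfolding restr_def by (metis restrict_apply')
    have "(a, u) \<in> (adjrel A)\<^sup>*" "(a, v) \<in> (adjrel A)\<^sup>*"
      using au av unfolding adjrel_def by auto
    then have "f u = g u" "f v = g v"
      using lifts_agree_along_path[OF A f g _ agree[OF a]] by simp_all
    show "f = g"
    proof (rule PiE_ext)
      show "f \<in> VM \<rightarrow>\<^sub>E {1..m}" "g \<in> VM \<rightarrow>\<^sub>E {1..m}"
        using f g unfolding lifts_def by simp_all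
    next
      fix x
      assume "x \<in> VM"
      then show "f x = g x"
        using agree \<open>f u = g u\<close> \<open>f v = g v\<close> by (cases "x \<in> {u, v}") auto
    qed
  qed
  moreover have "restr f \<in> PiE (VM - {u, v}) (\<lambda>x. if x = a then S else {1..m})"
    if f: "f \<in> lifts A" for f
  proof -
    have "f \<in> VM \<rightarrow>\<^sub>E {1..m}"
      using f unfolding lifts_def by simp
    then show ?thesis
      using S(2)[OF f] unfolding restr_def by (auto simp: PiE_iff)
  qed
  then have "restr ` lifts A \<subseteq> PiE (VM - {u, v}) (\<lambda>x. if x = a then S else {1..m})"
    by blast
  moreover have "finite (PiE (VM - {u, v}) (\<lambda>x. if x = a then S else {1..m}))"
    using finite_VM S(1) by (intro finite_PiE) (auto intro: finite_subset)
  ultimately have "card (lifts A) \<le> card (PiE (VM - {u, v}) (\<lambda>x. if x = a then S else {1..m}))"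
    by (metis card_image card_mono)
  also have "\<dots> = card S * m ^ (card (VM - {u, v}) - 1)"
    using finite_VM a by (simp add: card_PiE_if_eq)
  also have "card (VM - {u, v}) - 1 = card VM - 3"
    using finite_VM VM uv by (simp add: card_Diff_subset)
  finally show ?thesis .
qed

lemma three_le_card_VM: "T \<in> triangles VM EM \<Longrightarrow> 3 \<le> card VM"
  unfolding triangles_def using finite_VM card_mono by fastforce

lemma card_lifts_triangle_le:
  assumes T: "T \<in> triangles VM EM"
  shows "card (lifts (complete_edges T)) \<le> m ^ (card VM - 2)"
proof -
  have TVM: "T \<subseteq> VM" "card T = 3" "complete_edges T \<subseteq> EM"
    using T by (simp_all add: triangles_iff)
  then obtain a u v where auv: "T = {a, u, v}" "a \<noteq> u" "u \<noteq> v" "a \<noteq> v"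
    by (metis card_3_iff)
  have "card (lifts (complete_edges T)) \<le> card {1..m} * m ^ (card VM - 3)"
  proof (rule card_lifts_le_fan[OF TVM(3)])
    show "{a, u} \<in> complete_edges T" "{a, v} \<in> complete_edges T"
      using auv by (simp_all add: doubleton_in_complete_edges)
    show "f a \<in> {1..m}" if "f \<in> lifts (complete_edges T)" for f
      using that TVM(1) auv(1) unfolding lifts_def by auto
  qed (use auv in simp_all)
  moreover have "m ^ (card VM - 3) * m = m ^ (card VM - 2)"
    using three_le_card_VM[OF T] power_minus_mult[of "card VM - 2" m]
    by (simp add: numeral_3_eq_3 numeral_2_eq_2)
  ultimately show ?thesis
    by (simp add: mult.commute)
qed

lemma finite_triangles: "finite (triangles VM EM)"
proof -
  have "triangles VM EM \<subseteq> Pow VM"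
    unfolding triangles_def by blast
  then show ?thesis
    using finite_VM by (simp add: finite_subset)
qed

lemma inter_sum_three_le:
  "inter_sum VM EM m EH 3 \<le> (\<Sum>T\<in>triangles VM EM. card (lifts (complete_edges T)))
     + card (Pset VM EM (card VM - 3) 3) * m ^ (card VM - 3)"
proof -
  let ?P = "Pset VM EM (card VM - 3) 3"
  let ?L = "\<lambda>A. card (lifts A)"
  have "inter_sum VM EM m EH 3 = (\<Sum>A\<in>edge_subsets 3. ?L A)"
    by (rule inter_sum_eq_sum_card_lifts) simp
  also have "\<dots> = (\<Sum>A\<in>edge_subsets 3 - ?P. ?L A) + (\<Sum>A\<in>?P. ?L A)"
    by (rule sum.subset_diff[OF Pset_subset_edge_subsets finite_edge_subsets])
  finally have split: "inter_sum VM EM m EH 3 = (\<Sum>A\<in>edge_subsets 3 - ?P. ?L A) + (\<Sum>A\<in>?P. ?L A)" .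
  have "?L A \<le> m ^ (card VM - 3)" if "A \<in> ?P" for A
  proof -
    have "A \<subseteq> EM" "card (components VM A) = card VM - 3"
      using that unfolding Pset_def by simp_all
    then show ?thesis
      using card_lifts_le by metis
  qed
  then have forests: "(\<Sum>A\<in>?P. ?L A) \<le> card ?P * m ^ (card VM - 3)"
    using sum_mono[of ?P ?L "\<lambda>_. m ^ (card VM - 3)"] by simp
  have "edge_subsets 3 - ?P \<subseteq> complete_edges ` triangles VM EM"
  proof
    fix A
    assume "A \<in> edge_subsets 3 - ?P"
    then have A: "A \<subseteq> EM" "card A = 3" "card (components VM A) \<noteq> card VM - 3"
      unfolding edge_subsets_def Pset_def by auto
    obtain K where K: "K \<in> components VM A" "card K = 3" "A = complete_edges K"
      using complete_edges_if_three_edges[OF sgraph_subset[OF graph A(1)] A(2,3)] by blast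
    have "K \<in> triangles VM EM"
      unfolding triangles_iff using components_subset[OF K(1)] K(2,3) A(1) by simp
    then show "A \<in> complete_edges ` triangles VM EM"
      using K(3) by (rule rev_image_eqI)
  qed
  then have "(\<Sum>A\<in>edge_subsets 3 - ?P. ?L A) \<le> (\<Sum>A\<in>complete_edges ` triangles VM EM. ?L A)"
    by (rule sum_mono2[OF finite_imageI[OF finite_triangles]]) simp
  also have "\<dots> = (\<Sum>T\<in>triangles VM EM. ?L (complete_edges T))"
  proof (rule sum.reindex[unfolded comp_def])
    show "inj_on complete_edges (triangles VM EM)"
      using inj_on_complete_edges by (rule inj_on_subset) (auto simp: triangles_def)
  qed
  finally show ?thesis
    using split forests by linarith
qed

lemma inter_sum_le_of_seven_le:
  assumes k: "7 \<le> k"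
  shows "inter_sum VM EM m EH k \<le> (card EM choose k) * m ^ (card VM - 4)"
proof -
  have "card (lifts A) \<le> m ^ (card VM - 4)" if "A \<in> edge_subsets k" for A
  proof -
    have A: "A \<subseteq> EM" "card A = k"
      using that unfolding edge_subsets_def by simp_all
    then have "A \<noteq> {}"
      using k by auto
    have "(3 + 1) choose 2 < card A"
      using A(2) k by (simp add: choose_two)
    then have "card (components VM A) + 3 < card VM"
      by (rule card_components_add_lt[OF sgraph_subset[OF graph A(1)]])
    then show ?thesis
      using card_lifts_le_power[OF A(1) \<open>A \<noteq> {}\<close>] by simp
  qed
  then have "(\<Sum>A\<in>edge_subsets k. card (lifts A)) \<le> card (edge_subsets k) * m ^ (card VM - 4)"
    using sum_mono[of "edge_subsets k" "\<lambda>A. card (lifts A)" "\<lambda>_. m ^ (card VM - 4)"] by simp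
  then show ?thesis
    using k by (simp add: inter_sum_eq_sum_card_lifts card_edge_subsets)
qed

lemma inter_sum_five_le:
  "inter_sum VM EM m EH 5 \<le> card (Pset VM EM (card VM - 3) 5) * m ^ (card VM - 3)
     + ((card EM choose 5) - card (Pset VM EM (card VM - 3) 5)) * m ^ (card VM - 4)"
proof -
  let ?P = "Pset VM EM (card VM - 3) 5"
  let ?L = "\<lambda>A. card (lifts A)"
  have "?L A \<le> m ^ (card VM - 3)" if "A \<in> ?P" for A
  proof -
    have "A \<subseteq> EM" "card (components VM A) = card VM - 3"
      using that unfolding Pset_def by simp_all
    then show ?thesis
      using card_lifts_le by metis
  qed
  then have forests: "(\<Sum>A\<in>?P. ?L A) \<le> card ?P * m ^ (card VM - 3)"
    using sum_mono[of ?P ?L "\<lambda>_. m ^ (card VM - 3)"] by simp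
  have "?L A \<le> m ^ (card VM - 4)" if "A \<in> edge_subsets 5 - ?P" for A
  proof -
    have A: "A \<subseteq> EM" "card A = 5" "card (components VM A) \<noteq> card VM - 3"
      using that unfolding edge_subsets_def Pset_def by auto
    then have "A \<noteq> {}"
      by auto
    have "(2 + 1) choose 2 < card A"
      using A(2) by (simp add: choose_two)
    then have "card (components VM A) + 2 < card VM"
      by (rule card_components_add_lt[OF sgraph_subset[OF graph A(1)]])
    then show ?thesis
      using card_lifts_le_power[OF A(1) \<open>A \<noteq> {}\<close>] A(3) by simp
  qed
  then have "(\<Sum>A\<in>edge_subsets 5 - ?P. ?L A) \<le> card (edge_subsets 5 - ?P) * m ^ (card VM - 4)"
    using sum_mono[of "edge_subsets 5 - ?P" ?L "\<lambda>_. m ^ (card VM - 4)"] by simp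
  also have "card (edge_subsets 5 - ?P) = (card EM choose 5) - card ?P"
    using card_Diff_subset[OF finite_subset[OF Pset_subset_edge_subsets finite_edge_subsets]
        Pset_subset_edge_subsets]
    by (simp add: card_edge_subsets)
  finally have others: "(\<Sum>A\<in>edge_subsets 5 - ?P. ?L A)
      \<le> ((card EM choose 5) - card ?P) * m ^ (card VM - 4)" .
  have "inter_sum VM EM m EH 5 = (\<Sum>A\<in>edge_subsets 5 - ?P. ?L A) + (\<Sum>A\<in>?P. ?L A)"
    using sum.subset_diff[OF Pset_subset_edge_subsets finite_edge_subsets]
    by (simp add: inter_sum_eq_sum_card_lifts)
  then show ?thesis
    using forests others by linarith
qed

lemma card_Pset_mult_le_inter_sum:
  assumes k: "0 < k"
  shows "card (Pset VM EM (card VM - 3) k) * m ^ (card VM - 3)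
    \<le> inter_sum VM EM m EH k
      + card (Pset VM EM (card VM - 3) k) * (\<Sum>e\<in>EM. x_edge m EH e) * m ^ (card VM - 4)"
proof -
  let ?P = "Pset VM EM (card VM - 3) k"
  let ?X = "\<Sum>e\<in>EM. x_edge m EH e"
  have "m ^ (card VM - 3) \<le> card (lifts A) + ?X * m ^ (card VM - 4)" if "A \<in> ?P" for A
  proof -
    have A: "A \<subseteq> EM" "card (components VM A) = card VM - 3"
      using that unfolding Pset_def by simp_all
    have "m ^ (card VM - 3) \<le> card (lifts A) + (\<Sum>e\<in>A. x_edge m EH e) * m ^ (card VM - 4)"
      using card_lifts_ge[OF A(1)] A(2) by (simp add: diff_diff_left)
    also have "(\<Sum>e\<in>A. x_edge m EH e) \<le> ?X"
      by (rule sum_mono2[OF finite_EM A(1)]) simp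
    finally show ?thesis
      by simp
  qed
  then have "card ?P * m ^ (card VM - 3) \<le> (\<Sum>A\<in>?P. card (lifts A)) + card ?P * ?X * m ^ (card VM - 4)"
    using sum_mono[of ?P "\<lambda>_. m ^ (card VM - 3)" "\<lambda>A. card (lifts A) + ?X * m ^ (card VM - 4)"]
    by (simp add: sum.distrib mult.assoc)
  also have "(\<Sum>A\<in>?P. card (lifts A)) \<le> inter_sum VM EM m EH k"
    unfolding inter_sum_eq_sum_card_lifts[OF k]
    by (rule sum_mono2[OF finite_edge_subsets Pset_subset_edge_subsets]) simp
  finally show ?thesis
    by simp
qed

end

locale normalized_join_cover = full_cover "joinV V w" "joinE V E w" m EH
  for V :: "'v set" and E :: "'v set set" and w :: 'v and m :: nat and EH +
  assumes base: "sgraph V E" and apex: "w \<notin> V"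
    and normal: "\<And>v j. v \<in> V \<Longrightarrow> j \<in> {1..m} \<Longrightarrow> {(w, j), (v, j)} \<in> EH"
begin

lemma spoke_in_joinE: "v \<in> V \<Longrightarrow> {w, v} \<in> joinE V E w"
  unfolding joinE_def by blast

lemma E_subset_joinE: "E \<subseteq> joinE V E w"
  unfolding joinE_def by blast

lemma x_edge_spoke: 
  assumes v: "v \<in> V"
  shows "x_edge m EH {w, v} = 0"
proof -
  have "straight_colours {w, v} = {1..m}"
    using normal[OF v] by (auto simp: straight_colours_doubleton)
  then show ?thesis
    using card_straight_colours_add_x_edge[OF spoke_in_joinE[OF v]] by simp
qed

lemma sum_x_edge_joinE: "(\<Sum>e\<in>joinE V E w. x_edge m EH e) = xH m EH E"
proof -
  have "(\<Sum>e\<in>joinE V E w. x_edge m EH e)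
      = (\<Sum>e\<in>joinE V E w - E. x_edge m EH e) + (\<Sum>e\<in>E. x_edge m EH e)"
    by (rule sum.subset_diff[OF E_subset_joinE finite_EM])
  moreover have "x_edge m EH e = 0" if e: "e \<in> joinE V E w - E" for e
  proof -
    obtain v where "v \<in> V" "e = {w, v}"
      using e unfolding joinE_def by blast
    then show ?thesis
      by (simp add: x_edge_spoke)
  qed
  ultimately show ?thesis
    unfolding xH_def by simp
qed

lemma apex_triangle_mem:
  assumes "e \<in> E"
  shows "insert w e \<in> triangles (joinV V w) (joinE V E w)"
proof -
  obtain u v where uv: "e = {u, v}" "u \<noteq> v" "u \<in> V" "v \<in> V"
    using base assms by (rule sgraph_edgeE)
  then have "w \<noteq> u" "w \<noteq> v"
    using apex by auto
  then have "card (insert w e) = 3" "insert w e \<subseteq> joinV V w"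
    using uv unfolding joinV_def by auto
  moreover have "{x, y} \<in> joinE V E w" if "x \<in> insert w e" "y \<in> insert w e" "x \<noteq> y" for x y
  proof -
    have "{x, y} = {u, v} \<or> {x, y} = {w, u} \<or> {x, y} = {w, v}"
      using that uv(1) by auto
    then show ?thesis
      using assms uv E_subset_joinE spoke_in_joinE by auto
  qed
  ultimately show ?thesis
    unfolding triangles_def by blast
qed

lemma triangles_through_apex:
  "{T \<in> triangles (joinV V w) (joinE V E w). w \<in> T} = insert w ` E"
proof (intro set_eqI iffI)
  fix T
  assume "T \<in> {T \<in> triangles (joinV V w) (joinE V E w). w \<in> T}"
  then have T: "T \<subseteq> insert w V" "card T = 3" "w \<in> T"
    and edges: "\<And>x y. x \<in> T \<Longrightarrow> y \<in> T \<Longrightarrow> x \<noteq> y \<Longrightarrow> {x, y} \<in> joinE V E w"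
    unfolding triangles_def joinV_def by blast+
  then have "card (T - {w}) = 2"
    by (simp add: card_Diff_singleton)
  then obtain u v where uv: "T - {w} = {u, v}" "u \<noteq> v"
    unfolding card_2_iff by blast
  then have "u \<in> V" "v \<in> V" "{u, v} \<in> joinE V E w"
    using T(1) edges[of u v] by auto
  moreover have "{u, v} \<noteq> {w, x}" for x
    using \<open>u \<in> V\<close> \<open>v \<in> V\<close> apex by (auto simp: doubleton_eq_iff)
  ultimately have "{u, v} \<in> E"
    unfolding joinE_def by blast
  moreover have "T = insert w {u, v}"
    using uv T(3) by blast
  ultimately show "T \<in> insert w ` E"
    by blast
next
  fix T
  assume "T \<in> insert w ` E"
  then show "T \<in> {T \<in> triangles (joinV V w) (joinE V E w). w \<in> T}"
    using apex_triangle_mem by blast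
qed

lemma card_lifts_apex_triangle:
  assumes e: "e \<in> E"
  shows "card (lifts (complete_edges (insert w e))) + x_edge m EH e * m ^ (card (joinV V w) - 3)
    \<le> m ^ (card (joinV V w) - 2)"
proof -
  obtain u v where UV: "e = {u, v}" "u \<noteq> v" "u \<in> V" "v \<in> V"
    using base e by (rule sgraph_edgeE)
  then have uv: "{u, v} \<in> E"
    using e by simp
  let ?A = "complete_edges {w, u, v}"
  have T: "{w, u, v} \<in> triangles (joinV V w) (joinE V E w)"
    using apex_triangle_mem[OF e] UV(1) by simp
  then have A: "?A \<subseteq> joinE V E w"
    by (simp add: triangles_iff)
  have wu: "{w, u} \<in> ?A" and wv: "{w, v} \<in> ?A" and uv': "{u, v} \<in> ?A"
    using UV apex by (auto intro: doubleton_in_complete_edges)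
  have "f w \<in> straight_colours {u, v}" if f: "f \<in> lifts ?A" for f
  proof -
    have fw: "f w \<in> {1..m}" and "f u \<in> {1..m}" "f v \<in> {1..m}"
      using lift_range[OF f] UV unfolding joinV_def by simp_all
    then have fib: "(w, f w) \<in> fib m w" "(u, f u) \<in> fib m u" "(u, f w) \<in> fib m u"
      "(v, f v) \<in> fib m v" "(v, f w) \<in> fib m v"
      unfolding fib_def by auto
    have "(u, f u) = (u, f w)"
      by (rule lift_unique[OF spoke_in_joinE[OF UV(3)] fib(1,2,3) lift_edge[OF f wu]
            normal[OF UV(3) fw]])
    moreover have "(v, f v) = (v, f w)"
      by (rule lift_unique[OF spoke_in_joinE[OF UV(4)] fib(1,4,5) lift_edge[OF f wv]
            normal[OF UV(4) fw]])
    ultimately show ?thesis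
      using lift_edge[OF f uv'] fw by (simp add: straight_colours_doubleton)
  qed
  then have "card (lifts ?A) \<le> card (straight_colours {u, v}) * m ^ (card (joinV V w) - 3)"
    using UV(2) A wu wv by (intro card_lifts_le_fan) (auto simp: straight_colours_def)
  then have "card (lifts ?A) + x_edge m EH {u, v} * m ^ (card (joinV V w) - 3)
      \<le> (card (straight_colours {u, v}) + x_edge m EH {u, v}) * m ^ (card (joinV V w) - 3)"
    by (simp add: add_mult_distrib)
  also have "card (straight_colours {u, v}) + x_edge m EH {u, v} = m"
    using card_straight_colours_add_x_edge E_subset_joinE uv by blast
  also have "m * m ^ (card (joinV V w) - 3) = m ^ (card (joinV V w) - 2)"
    using three_le_card_VM[OF T] power_minus_mult[of "card (joinV V w) - 2" m]
    by (simp add: numeral_3_eq_3 numeral_2_eq_2 mult.commute)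
  finally show ?thesis
    unfolding UV(1) by simp
qed

lemma sum_card_lifts_triangles_le:
  "(\<Sum>T\<in>triangles (joinV V w) (joinE V E w). card (lifts (complete_edges T)))
      + xH m EH E * m ^ (card (joinV V w) - 3)
    \<le> card (triangles (joinV V w) (joinE V E w)) * m ^ (card (joinV V w) - 2)"
proof -
  let ?T = "triangles (joinV V w) (joinE V E w)"
  let ?B = "{T \<in> ?T. w \<in> T}"
  let ?L = "\<lambda>T. card (lifts (complete_edges T))"
  let ?p = "m ^ (card (joinV V w) - 3)" and ?q = "m ^ (card (joinV V w) - 2)"
  have B_sub: "?B \<subseteq> ?T"
    by blast
  have inj: "inj_on (insert w) E"
  proof (rule inj_onI)
    fix e e'
    assume "e \<in> E" "e' \<in> E" "insert w e = insert w e'"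
    moreover have "w \<notin> e" "w \<notin> e'"
      using base \<open>e \<in> E\<close> \<open>e' \<in> E\<close> apex by (auto elim: sgraph_edgeE)
    ultimately show "e = e'"
      by (metis insert_ident)
  qed
  have "(\<Sum>T\<in>?T - ?B. ?L T) \<le> card (?T - ?B) * ?q"
    using sum_mono[of "?T - ?B" ?L "\<lambda>_. ?q"] card_lifts_triangle_le by simp
  moreover have "(\<Sum>T\<in>?B. ?L T) + xH m EH E * ?p \<le> card ?B * ?q"
  proof -
    have "(\<Sum>T\<in>?B. ?L T) + xH m EH E * ?p = (\<Sum>e\<in>E. ?L (insert w e) + x_edge m EH e * ?p)"
      unfolding triangles_through_apex xH_def sum.reindex[OF inj]
      by (simp add: sum.distrib sum_distrib_right)
    also have "\<dots> \<le> (\<Sum>e\<in>E. ?q)"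
      by (rule sum_mono) (rule card_lifts_apex_triangle)
    also have "\<dots> = card ?B * ?q"
      unfolding triangles_through_apex by (simp add: card_image[OF inj])
    finally show ?thesis .
  qed
  moreover have "(\<Sum>T\<in>?T. ?L T) = (\<Sum>T\<in>?T - ?B. ?L T) + (\<Sum>T\<in>?B. ?L T)"
    by (rule sum.subset_diff[OF B_sub finite_triangles])
  moreover have "card ?T = card (?T - ?B) + card ?B"
    using card_Diff_subset[OF finite_subset[OF B_sub finite_triangles] B_sub]
      card_mono[OF finite_triangles B_sub] by simp
  ultimately show ?thesis
    by (simp add: add_mult_distrib)
qed


lemma int_inter_sum_three_le:
  "int (inter_sum (joinV V w) (joinE V E w) m EH 3)
    \<le> int (num_triangles (joinV V w) (joinE V E w)) * int m ^ (card (joinV V w) - 2)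
      - int (xH m EH E) * int m ^ (card (joinV V w) - 3)
      + int (card (Pset (joinV V w) (joinE V E w) (card (joinV V w) - 3) 3))
        * int m ^ (card (joinV V w) - 3)"
proof -
  have "inter_sum (joinV V w) (joinE V E w) m EH 3 + xH m EH E * m ^ (card (joinV V w) - 3)
      \<le> num_triangles (joinV V w) (joinE V E w) * m ^ (card (joinV V w) - 2)
        + card (Pset (joinV V w) (joinE V E w) (card (joinV V w) - 3) 3) * m ^ (card (joinV V w) - 3)"
    using inter_sum_three_le sum_card_lifts_triangles_le
    unfolding num_triangles_eq_card_triangles by linarith
  then show ?thesis
    by (simp only: of_nat_le_iff[symmetric, where 'a = int] of_nat_add of_nat_mult of_nat_power)
qed

lemma int_inter_sum_ge:
  assumes "0 < k"
  shows "int (inter_sum (joinV V w) (joinE V E w) m EH k)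
    \<ge> int (card (Pset (joinV V w) (joinE V E w) (card (joinV V w) - 3) k)) * int m ^ (card (joinV V w) - 3)
      - 2 * int (card (Pset (joinV V w) (joinE V E w) (card (joinV V w) - 3) k)) * int (xH m EH E)
        * int m ^ (card (joinV V w) - 4)"
proof -
  have "0 \<le> int (card (Pset (joinV V w) (joinE V E w) (card (joinV V w) - 3) k)) * int (xH m EH E)
      * int m ^ (card (joinV V w) - 4)"
    by simp
  moreover have "card (Pset (joinV V w) (joinE V E w) (card (joinV V w) - 3) k) * m ^ (card (joinV V w) - 3)
    \<le> inter_sum (joinV V w) (joinE V E w) m EH k
      + card (Pset (joinV V w) (joinE V E w) (card (joinV V w) - 3) k) * xH m EH E
        * m ^ (card (joinV V w) - 4)"
    using card_Pset_mult_le_inter_sum[OF assms] unfolding sum_x_edge_joinE .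
  ultimately show ?thesis
    by (simp only: of_nat_le_iff[symmetric, where 'a = int] of_nat_add of_nat_mult of_nat_power)
qed

lemma int_inter_sum_five_le:
  "int (inter_sum (joinV V w) (joinE V E w) m EH 5)
    \<le> int (card (Pset (joinV V w) (joinE V E w) (card (joinV V w) - 3) 5)) * int m ^ (card (joinV V w) - 3)
      + (int (card (joinE V E w) choose 5)
          - int (card (Pset (joinV V w) (joinE V E w) (card (joinV V w) - 3) 5)))
        * int m ^ (card (joinV V w) - 4)"
proof -
  have "card (Pset (joinV V w) (joinE V E w) (card (joinV V w) - 3) 5) \<le> card (joinE V E w) choose 5"
    using card_mono[OF finite_edge_subsets Pset_subset_edge_subsets] unfolding card_edge_subsets .
  with inter_sum_five_le show ?thesis
    by (simp only: of_nat_le_iff[symmetric, where 'a = int] of_nat_add of_nat_mult of_nat_power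
        of_nat_diff)
qed

lemma int_inter_sum_le:
  "7 \<le> k \<Longrightarrow> int (inter_sum (joinV V w) (joinE V E w) m EH k)
    \<le> int (card (joinE V E w) choose k) * int m ^ (card (joinV V w) - 4)"
  using inter_sum_le_of_seven_le
  by (simp only: of_nat_le_iff[symmetric, where 'a = int] of_nat_mult of_nat_power)

end

theorem lemma12:
  fixes V :: "'v set" and E :: "'v set set" and w :: 'v
    and n s m :: nat and EH :: "('v \<times> nat) set set"
  assumes G: "sgraph V E"
    and nV: "card V = n - 1" and n4: "n \<ge> 4"
    and sE: "card E = s" and s3: "s \<ge> 3"
    and w: "w \<notin> V"
    and cover: "is_named_cover (joinV V w) (joinE V E w) m EH"
    and full: "\<And>u v. {u, v} \<in> joinE V E w \<Longrightarrow>
                 card (edges_between EH (fib m u) (fib m v)) = m"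
    and normal: "\<And>v j. v \<in> V \<Longrightarrow> j \<in> {1..m} \<Longrightarrow> {(w, j), (v, j)} \<in> EH"
  shows
    "int (inter_sum (joinV V w) (joinE V E w) m EH 3) \<le>
       int (num_triangles (joinV V w) (joinE V E w)) * int m ^ (n - 2)
       - int (xH m EH E) * int m ^ (n - 3)
       + int (card (Pset (joinV V w) (joinE V E w) (n - 3) 3)) * int m ^ (n - 3)
     \<and> int (inter_sum (joinV V w) (joinE V E w) m EH 4) \<ge>
       int (card (Pset (joinV V w) (joinE V E w) (n - 3) 4)) * int m ^ (n - 3)
       - 2 * int (card (Pset (joinV V w) (joinE V E w) (n - 3) 4)) * int (xH m EH E) * int m ^ (n - 4)
     \<and> int (inter_sum (joinV V w) (joinE V E w) m EH 5) \<le>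
       int (card (Pset (joinV V w) (joinE V E w) (n - 3) 5)) * int m ^ (n - 3)
       + (int ((s + n - 1) choose 5) - int (card (Pset (joinV V w) (joinE V E w) (n - 3) 5)))
           * int m ^ (n - 4)
     \<and> int (inter_sum (joinV V w) (joinE V E w) m EH 6) \<ge>
       int (card (Pset (joinV V w) (joinE V E w) (n - 3) 6)) * int m ^ (n - 3)
       - 2 * int (card (Pset (joinV V w) (joinE V E w) (n - 3) 6)) * int (xH m EH E) * int m ^ (n - 4)
     \<and> (\<forall>k\<ge>7. int (inter_sum (joinV V w) (joinE V E w) m EH k) \<le>
            int ((s + n - 1) choose k) * int m ^ (n - 4))"
proof -
  have "finite V"
    using G unfolding sgraph_def by simp
  then have n: "card (joinV V w) = n"
    using w nV n4 unfolding joinV_def by simp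
  have l: "card (joinE V E w) = s + n - 1"
    using card_joinE[OF G w] sE nV n4 by simp
  interpret normalized_join_cover V E w m EH
    by unfold_locales (fact sgraph_join[OF G w] cover full G w normal)+
  show ?thesis
    using int_inter_sum_three_le int_inter_sum_ge[of 4] int_inter_sum_ge[of 6]
      int_inter_sum_five_le int_inter_sum_le
    unfolding n l by simp
qed

end
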